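(* Let $P$ be an online minimization problem, let $p^r$ be an $r$-round input distribution with associated round cost functions $\mathrm{cost}_i$, and let $\mathrm{ALG}$ be a deterministic algorithm reading at most $b$ bits of advice on every input in the support of $p^r$. Assume there is a convex and decreasing function $f:[0,\infty]\to\mathbb{R}$ such that for every $1\leq i\leq r$ and every $w\in\mathcal{W}_i$, $$\mathbb{E}[\mathrm{cost}_i(\mathrm{ALG})\mid W_i=w]\geq f\big(D_{KL}(p_{i\mid w}\,\|\,p_i)\big).$$ Then $\mathbb{E}[\mathrm{cost}(\mathrm{ALG})]\geq r\,f(b/r)$.
   Context: For $P$-inputs $\sigma_1,\dots,\sigma_r$, $\sigma_1\cdots\sigma_r$ denotes the input with initial state of $\sigma_1$ and the requests of all $\sigma_i$ concatenated. An $r$-round input distribution: finite sets $I_1,\dots,I_r$ of $P$-inputs such that every $\sigma_1\cdots\sigma_r$ with $\sigma_i\in I_i$ is a valid $P$-input; $I^r$ is the set of all these; for each $i$ a round cost function $\mathrm{cost}_i$ mapping an output $\gamma$ for an input $\sigma\in I^r$ to a non-negative real; distributions $p_i$ on $I_i$ and the product distribution $p^r(\sigma_1\cdots\sigma_r)=\prod_ip_i(\sigma_i)$. With the input drawn from $p^r$: $X_i$ is the round-$i$ part $\sigma_i$; $B$ is the $b$-bit advice string that $\mathrm{ALG}$ receives at the start (the first $b$ bits of the oracle's tape for that input); $\mathrm{cost}_i(\mathrm{ALG})$ is $\mathrm{cost}_i$ of $\mathrm{ALG}$'s output, $\mathrm{cost}(\mathrm{ALG})=\sum_i\mathrm{cost}_i(\mathrm{ALG})$;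 $W_i=(X_1,\dots,X_{i-1},B)$ with $\mathcal{W}_i$ the set of its values of positive probability; $p_{i\mid w}(x)=\Pr[X_i=x\mid W_i=w]$. $D_{KL}(\mu\|\nu)=\sum_\omega\mu(\omega)\log_2(\mu(\omega)/\nu(\omega))$ (with $0\log0=0$). *)

theory Defs
  imports "HOL-Probability.Probability"
begin

text \<open>An r-round input
  sigma_1 ... sigma_r is represented by the list [sigma_1, ..., sigma_r]
  of its round parts (index i-1 holds round i); its i-th round part is drawn
  independently from p i.\<close>
fun rounds_pmf :: "(nat \<Rightarrow> 'a pmf) \<Rightarrow> nat \<Rightarrow> 'a list pmf" where
  "rounds_pmf p 0 = return_pmf []"
| "rounds_pmf p (Suc n) =
     bind_pmf (rounds_pmf p n) (\<lambda>xs. map_pmf (\<lambda>x. xs @ [x]) (p n))"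

text \<open>Kullback-Leibler divergence in bits, with the convention 0 log 0 = 0
  (terms with mu(omega) = 0 are omitted by summing over the support).\<close>
definition KL_div :: "'a pmf \<Rightarrow> 'a pmf \<Rightarrow> real" where
  "KL_div \<mu> \<nu> = (\<Sum>\<omega>\<in>set_pmf \<mu>. pmf \<mu> \<omega> * log 2 (pmf \<mu> \<omega> / pmf \<nu> \<omega>))"

definition advice :: "('i \<Rightarrow> nat \<Rightarrow> bool) \<Rightarrow> nat \<Rightarrow> 'i \<Rightarrow> bool list" where
  "advice tape b \<sigma> = map (tape \<sigma>) [0..<b]"

end

theory Submission
  imports Defs
begin

text \<open>Let K(i) be the average, over the values w of W(i), of the divergence from p(i) of the
  conditional law of round i given w. Since round i is independent of the earlier rounds and
  distributed as p(i), the chain rule gives K(i) = H(B | rounds < i) - H(B | rounds \<le> i) for the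
  advice B. The K(i) therefore telescope to H(B) - H(B | input) = H(B) \<le> b, the advice being a
  function of the input. Jensen's inequality for f turns the round hypothesis into
  E[cost(i)] \<ge> f(K(i)); applied once more, together with monotonicity of f, it gives
  \<Sum> f(K(i)) \<ge> r f(b/r).\<close>

lemma measure_pmf_cong_support:
  assumes "\<And>\<tau>. \<tau> \<in> set_pmf P \<Longrightarrow> \<tau> \<in> A \<longleftrightarrow> \<tau> \<in> B"
  shows "measure_pmf.prob P A = measure_pmf.prob P B"
proof -
  have "A \<inter> set_pmf P = B \<inter> set_pmf P" using assms by auto
  then show ?thesis by (metis measure_Int_set_pmf)
qed

lemma measure_pmf_finite_support:
  assumes "finite (set_pmf P)"
  shows "measure_pmf.prob P A = (\<Sum>\<sigma>\<in>set_pmf P \<inter> A. pmf P \<sigma>)"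
proof -
  have "measure_pmf.prob P A = measure_pmf.prob P (set_pmf P \<inter> A)"
    by (simp add: measure_Int_set_pmf Int_commute)
  also have "\<dots> = (\<Sum>\<sigma>\<in>set_pmf P \<inter> A. pmf P \<sigma>)"
    using assms by (intro measure_measure_pmf_finite) auto
  finally show ?thesis .
qed

lemma measure_pmf_fibre_eq_sum:
  "finite (set_pmf P) \<Longrightarrow>
    measure_pmf.prob P {\<tau>. V \<tau> = w} = (\<Sum>\<sigma>\<in>{\<sigma>\<in>set_pmf P. V \<sigma> = w}. pmf P \<sigma>)"
  by (simp add: measure_pmf_finite_support Int_def)

lemma expectation_finite_support:
  "finite (set_pmf P) \<Longrightarrow>
    measure_pmf.expectation P g = (\<Sum>\<sigma>\<in>set_pmf P. pmf P \<sigma> * g \<sigma>)"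
  by (subst integral_measure_pmf_real[where A = "set_pmf P"]) (auto simp: mult.commute)

lemma sum_measure_pmf_fibres:
  assumes "finite (set_pmf P)"
  shows "(\<Sum>w\<in>V ` set_pmf P. measure_pmf.prob P {\<tau>. V \<tau> = w}) = 1"
proof -
  have "(\<Sum>w\<in>V ` set_pmf P. measure_pmf.prob P {\<tau>. V \<tau> = w})
      = (\<Sum>w\<in>V ` set_pmf P. \<Sum>\<sigma>\<in>{\<sigma>\<in>set_pmf P. V \<sigma> = w}. pmf P \<sigma>)"
    using assms by (simp add: measure_pmf_fibre_eq_sum)
  also have "\<dots> = (\<Sum>\<sigma>\<in>set_pmf P. pmf P \<sigma>)"
    using assms by (intro sum.group) auto
  also have "\<dots> = 1"
    using assms by (intro sum_pmf_eq_1) auto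
  finally show ?thesis .
qed

lemma measure_cond_pmf_fibre:
  assumes "finite (set_pmf P)" and "w \<in> V ` set_pmf P"
  shows "measure_pmf.prob (cond_pmf P {\<tau>. V \<tau> = w}) A
    = measure_pmf.prob P ({\<tau>. V \<tau> = w} \<inter> A) / measure_pmf.prob P {\<tau>. V \<tau> = w}"
proof -
  have "set_pmf P \<inter> {\<tau>. V \<tau> = w} \<noteq> {}" using assms(2) by auto
  then have "measure_pmf.prob (cond_pmf P {\<tau>. V \<tau> = w}) A
      = (\<Sum>\<tau>\<in>set_pmf P \<inter> ({\<tau>. V \<tau> = w} \<inter> A). pmf P \<tau> / measure_pmf.prob P {\<tau>. V \<tau> = w})"
    using assms(1) by (subst measure_pmf_finite_support) (auto simp: pmf_cond Int_assoc intro!: sum.cong)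
  also have "\<dots> = measure_pmf.prob P ({\<tau>. V \<tau> = w} \<inter> A) / measure_pmf.prob P {\<tau>. V \<tau> = w}"
    using assms(1) by (simp add: sum_divide_distrib[symmetric] measure_pmf_finite_support)
  finally show ?thesis .
qed

lemma expectation_eq_sum_cond_pmf:
  assumes fin: "finite (set_pmf P)"
  shows "measure_pmf.expectation P g = (\<Sum>w\<in>V ` set_pmf P.
    measure_pmf.prob P {\<tau>. V \<tau> = w} * measure_pmf.expectation (cond_pmf P {\<tau>. V \<tau> = w}) g)"
proof -
  have fibre: "measure_pmf.prob P {\<tau>. V \<tau> = w} * measure_pmf.expectation (cond_pmf P {\<tau>. V \<tau> = w}) g
      = (\<Sum>\<sigma>\<in>{\<sigma>\<in>set_pmf P. V \<sigma> = w}. pmf P \<sigma> * g \<sigma>)"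
    if w: "w \<in> V ` set_pmf P" for w
  proof -
    have nonempty: "set_pmf P \<inter> {\<tau>. V \<tau> = w} \<noteq> {}" using w by auto
    have pos: "measure_pmf.prob P {\<tau>. V \<tau> = w} > 0"
      using w by (auto intro: measure_pmf_posI)
    have "measure_pmf.expectation (cond_pmf P {\<tau>. V \<tau> = w}) g
        = (\<Sum>\<sigma>\<in>{\<sigma>\<in>set_pmf P. V \<sigma> = w}. pmf P \<sigma> * g \<sigma> / measure_pmf.prob P {\<tau>. V \<tau> = w})"
      using fin nonempty
      by (subst expectation_finite_support) (auto simp: pmf_cond Int_def intro!: sum.cong)
    then show ?thesis using pos by (simp add: sum_divide_distrib[symmetric])
  qed
  have "(\<Sum>w\<in>V ` set_pmf P. measure_pmf.prob P {\<tau>. V \<tau> = w} *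
        measure_pmf.expectation (cond_pmf P {\<tau>. V \<tau> = w}) g)
      = (\<Sum>w\<in>V ` set_pmf P. \<Sum>\<sigma>\<in>{\<sigma>\<in>set_pmf P. V \<sigma> = w}. pmf P \<sigma> * g \<sigma>)"
    by (intro sum.cong refl fibre)
  also have "\<dots> = (\<Sum>\<sigma>\<in>set_pmf P. pmf P \<sigma> * g \<sigma>)"
    using fin by (intro sum.group) auto
  finally show ?thesis using fin by (simp add: expectation_finite_support)
qed

lemma sum_pmf_log_le_log_expectation:
  assumes fin: "finite (set_pmf P)" and pos: "\<And>\<sigma>. \<sigma> \<in> set_pmf P \<Longrightarrow> x \<sigma> > 0"
  shows "(\<Sum>\<sigma>\<in>set_pmf P. pmf P \<sigma> * log 2 (x \<sigma>)) \<le> log 2 (\<Sum>\<sigma>\<in>set_pmf P. pmf P \<sigma> * x \<sigma>)"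
  using concave_on_sum[OF fin set_pmf_not_empty log_concave[of 2] sum_pmf_eq_1[OF fin order_refl]]
    pos by simp

lemma KL_div_nonneg:
  assumes fin: "finite (set_pmf \<mu>)" and sub: "set_pmf \<mu> \<subseteq> set_pmf \<nu>"
  shows "KL_div \<mu> \<nu> \<ge> 0"
proof -
  have pos: "pmf \<mu> \<omega> > 0" "pmf \<nu> \<omega> > 0" if "\<omega> \<in> set_pmf \<mu>" for \<omega>
    using that sub by (auto simp: pmf_positive)
  have "- KL_div \<mu> \<nu> = (\<Sum>\<omega>\<in>set_pmf \<mu>. pmf \<mu> \<omega> * log 2 (pmf \<nu> \<omega> / pmf \<mu> \<omega>))"
    unfolding KL_div_def sum_negf[symmetric]
    by (intro sum.cong refl) (simp add: pos log_divide algebra_simps)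
  also have "\<dots> \<le> log 2 (\<Sum>\<omega>\<in>set_pmf \<mu>. pmf \<mu> \<omega> * (pmf \<nu> \<omega> / pmf \<mu> \<omega>))"
    using fin pos by (intro sum_pmf_log_le_log_expectation) auto
  also have "(\<Sum>\<omega>\<in>set_pmf \<mu>. pmf \<mu> \<omega> * (pmf \<nu> \<omega> / pmf \<mu> \<omega>)) = measure_pmf.prob \<nu> (set_pmf \<mu>)"
    using fin by (auto simp: measure_measure_pmf_finite set_pmf_iff intro!: sum.cong)
  also have "log 2 (measure_pmf.prob \<nu> (set_pmf \<mu>)) \<le> 0"
  proof -
    obtain \<omega> where "\<omega> \<in> set_pmf \<mu>" using set_pmf_not_empty[of \<mu>] by blast
    then have "measure_pmf.prob \<nu> (set_pmf \<mu>) > 0" using sub by (auto intro: measure_pmf_posI)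
    then show ?thesis by simp
  qed
  finally show ?thesis by simp
qed

definition cond_KL_div :: "'a pmf \<Rightarrow> ('a \<Rightarrow> 'b) \<Rightarrow> ('a \<Rightarrow> 'c) \<Rightarrow> 'c pmf \<Rightarrow> real" where
  "cond_KL_div P V X q = (\<Sum>w\<in>V ` set_pmf P.
     measure_pmf.prob P {\<tau>. V \<tau> = w} * KL_div (map_pmf X (cond_pmf P {\<tau>. V \<tau> = w})) q)"

lemma KL_div_map_cond_pmf_nonneg:
  assumes "finite (set_pmf P)" and "X ` set_pmf P \<subseteq> set_pmf q" and "w \<in> V ` set_pmf P"
  shows "KL_div (map_pmf X (cond_pmf P {\<tau>. V \<tau> = w})) q \<ge> 0"
proof (rule KL_div_nonneg)
  have "set_pmf P \<inter> {\<tau>. V \<tau> = w} \<noteq> {}" using assms(3) by auto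
  then have "set_pmf (map_pmf X (cond_pmf P {\<tau>. V \<tau> = w})) = X ` (set_pmf P \<inter> {\<tau>. V \<tau> = w})"
    by simp
  then show "finite (set_pmf (map_pmf X (cond_pmf P {\<tau>. V \<tau> = w})))"
    and "set_pmf (map_pmf X (cond_pmf P {\<tau>. V \<tau> = w})) \<subseteq> set_pmf q"
    using assms(1,2) by auto
qed

lemma cond_KL_div_nonneg:
  "finite (set_pmf P) \<Longrightarrow> X ` set_pmf P \<subseteq> set_pmf q \<Longrightarrow> cond_KL_div P V X q \<ge> 0"
  unfolding cond_KL_div_def by (intro sum_nonneg mult_nonneg_nonneg KL_div_map_cond_pmf_nonneg) auto

lemma cond_KL_div_eq_sum:
  assumes fin: "finite (set_pmf P)"
  shows "cond_KL_div P V X q = (\<Sum>\<sigma>\<in>set_pmf P. pmf P \<sigma> *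
    log 2 (measure_pmf.prob P {\<tau>. V \<tau> = V \<sigma> \<and> X \<tau> = X \<sigma>}
      / (measure_pmf.prob P {\<tau>. V \<tau> = V \<sigma>} * pmf q (X \<sigma>))))"
proof -
  define L where "L w x = log 2 (measure_pmf.prob P {\<tau>. V \<tau> = w \<and> X \<tau> = x}
    / (measure_pmf.prob P {\<tau>. V \<tau> = w} * pmf q x))" for w x
  have fibre: "measure_pmf.prob P {\<tau>. V \<tau> = w} * KL_div (map_pmf X (cond_pmf P {\<tau>. V \<tau> = w})) q
      = (\<Sum>\<sigma>\<in>{\<sigma>\<in>set_pmf P. V \<sigma> = w}. pmf P \<sigma> * L (V \<sigma>) (X \<sigma>))"
    if w: "w \<in> V ` set_pmf P" for w
  proof -
    let ?S = "{\<sigma>\<in>set_pmf P. V \<sigma> = w}"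
    have pos: "measure_pmf.prob P {\<tau>. V \<tau> = w} > 0"
      using w by (auto intro: measure_pmf_posI)
    have "set_pmf P \<inter> {\<tau>. V \<tau> = w} \<noteq> {}" using w by auto
    then have support: "set_pmf (map_pmf X (cond_pmf P {\<tau>. V \<tau> = w})) = X ` ?S"
      by (simp add: Int_def)
    have pmf_cond: "pmf (map_pmf X (cond_pmf P {\<tau>. V \<tau> = w})) x
        = measure_pmf.prob P {\<tau>. V \<tau> = w \<and> X \<tau> = x} / measure_pmf.prob P {\<tau>. V \<tau> = w}" for x
      unfolding pmf_map using measure_cond_pmf_fibre[OF fin w, of "X -` {x}"]
      by (simp add: Int_def)
    have "measure_pmf.prob P {\<tau>. V \<tau> = w} * KL_div (map_pmf X (cond_pmf P {\<tau>. V \<tau> = w})) q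
        = (\<Sum>x\<in>X ` ?S. measure_pmf.prob P {\<tau>. V \<tau> = w \<and> X \<tau> = x} * L w x)"
      unfolding KL_div_def support sum_distrib_left
      using pos by (intro sum.cong refl) (simp add: pmf_cond L_def field_simps)
    also have "\<dots> = (\<Sum>x\<in>X ` ?S. \<Sum>\<sigma>\<in>{\<sigma>\<in>?S. X \<sigma> = x}. pmf P \<sigma> * L (V \<sigma>) (X \<sigma>))"
    proof (intro sum.cong refl)
      fix x assume "x \<in> X ` ?S"
      have "measure_pmf.prob P {\<tau>. V \<tau> = w \<and> X \<tau> = x} = (\<Sum>\<sigma>\<in>{\<sigma>\<in>?S. X \<sigma> = x}. pmf P \<sigma>)"
        using fin by (simp add: measure_pmf_finite_support Int_def conj_assoc)
      then show "measure_pmf.prob P {\<tau>. V \<tau> = w \<and> X \<tau> = x} * L w x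
          = (\<Sum>\<sigma>\<in>{\<sigma>\<in>?S. X \<sigma> = x}. pmf P \<sigma> * L (V \<sigma>) (X \<sigma>))"
        by (simp add: sum_distrib_right)
    qed
    also have "\<dots> = (\<Sum>\<sigma>\<in>?S. pmf P \<sigma> * L (V \<sigma>) (X \<sigma>))"
      using fin by (intro sum.group) auto
    finally show ?thesis .
  qed
  have "cond_KL_div P V X q
      = (\<Sum>w\<in>V ` set_pmf P. \<Sum>\<sigma>\<in>{\<sigma>\<in>set_pmf P. V \<sigma> = w}. pmf P \<sigma> * L (V \<sigma>) (X \<sigma>))"
    unfolding cond_KL_div_def by (intro sum.cong refl fibre)
  also have "\<dots> = (\<Sum>\<sigma>\<in>set_pmf P. pmf P \<sigma> * L (V \<sigma>) (X \<sigma>))"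
    using fin by (intro sum.group) auto
  finally show ?thesis by (simp add: L_def)
qed

lemma expectation_ge_cond_KL_div:
  fixes f :: "real \<Rightarrow> real"
  assumes fin: "finite (set_pmf P)" and support: "X ` set_pmf P \<subseteq> set_pmf q"
    and f_convex: "convex_on {0..} f"
    and bound: "\<And>w. w \<in> V ` set_pmf P \<Longrightarrow>
      f (KL_div (map_pmf X (cond_pmf P {\<tau>. V \<tau> = w})) q)
        \<le> measure_pmf.expectation (cond_pmf P {\<tau>. V \<tau> = w}) g"
  shows "f (cond_KL_div P V X q) \<le> measure_pmf.expectation P g"
proof -
  have "f (cond_KL_div P V X q) \<le> (\<Sum>w\<in>V ` set_pmf P. measure_pmf.prob P {\<tau>. V \<tau> = w} *
      f (KL_div (map_pmf X (cond_pmf P {\<tau>. V \<tau> = w})) q))"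
  proof -
    have "f (\<Sum>w\<in>V ` set_pmf P. measure_pmf.prob P {\<tau>. V \<tau> = w} *\<^sub>R
        KL_div (map_pmf X (cond_pmf P {\<tau>. V \<tau> = w})) q)
      \<le> (\<Sum>w\<in>V ` set_pmf P. measure_pmf.prob P {\<tau>. V \<tau> = w} *
        f (KL_div (map_pmf X (cond_pmf P {\<tau>. V \<tau> = w})) q))"
      using fin support
      by (intro convex_on_sum[OF _ _ f_convex sum_measure_pmf_fibres[OF fin]])
        (auto simp: set_pmf_not_empty KL_div_map_cond_pmf_nonneg)
    then show ?thesis unfolding cond_KL_div_def by simp
  qed
  also have "\<dots> \<le> (\<Sum>w\<in>V ` set_pmf P. measure_pmf.prob P {\<tau>. V \<tau> = w} *
      measure_pmf.expectation (cond_pmf P {\<tau>. V \<tau> = w}) g)"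
    using bound by (intro sum_mono mult_left_mono) auto
  also have "\<dots> = measure_pmf.expectation P g"
    by (rule expectation_eq_sum_cond_pmf[OF fin, symmetric])
  finally show ?thesis .
qed

definition cond_entropy :: "'a pmf \<Rightarrow> ('a \<Rightarrow> 'b) \<Rightarrow> ('a \<Rightarrow> 'c) \<Rightarrow> real" where
  "cond_entropy P B U = (\<Sum>\<sigma>\<in>set_pmf P. pmf P \<sigma> *
     log 2 (measure_pmf.prob P {\<tau>. U \<tau> = U \<sigma>} / measure_pmf.prob P {\<tau>. U \<tau> = U \<sigma> \<and> B \<tau> = B \<sigma>}))"

lemma cond_entropy_cong:
  assumes "\<And>\<sigma> \<tau>. \<sigma> \<in> set_pmf P \<Longrightarrow> \<tau> \<in> set_pmf P \<Longrightarrow> U' \<tau> = U' \<sigma> \<longleftrightarrow> U \<tau> = U \<sigma>"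
  shows "cond_entropy P B U' = cond_entropy P B U"
  unfolding cond_entropy_def
proof (intro sum.cong refl)
  fix \<sigma> assume "\<sigma> \<in> set_pmf P"
  then have "measure_pmf.prob P {\<tau>. U' \<tau> = U' \<sigma>} = measure_pmf.prob P {\<tau>. U \<tau> = U \<sigma>}"
    and "measure_pmf.prob P {\<tau>. U' \<tau> = U' \<sigma> \<and> B \<tau> = B \<sigma>}
      = measure_pmf.prob P {\<tau>. U \<tau> = U \<sigma> \<and> B \<tau> = B \<sigma>}"
    using assms by (auto intro!: measure_pmf_cong_support)
  then show "pmf P \<sigma> * log 2 (measure_pmf.prob P {\<tau>. U' \<tau> = U' \<sigma>}
      / measure_pmf.prob P {\<tau>. U' \<tau> = U' \<sigma> \<and> B \<tau> = B \<sigma>})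
    = pmf P \<sigma> * log 2 (measure_pmf.prob P {\<tau>. U \<tau> = U \<sigma>}
      / measure_pmf.prob P {\<tau>. U \<tau> = U \<sigma> \<and> B \<tau> = B \<sigma>})"
    by simp
qed

lemma cond_entropy_eq_0:
  assumes "\<And>\<sigma> \<tau>. \<sigma> \<in> set_pmf P \<Longrightarrow> \<tau> \<in> set_pmf P \<Longrightarrow> U \<tau> = U \<sigma> \<Longrightarrow> B \<tau> = B \<sigma>"
  shows "cond_entropy P B U = 0"
  unfolding cond_entropy_def
proof (intro sum.neutral ballI)
  fix \<sigma> assume \<sigma>: "\<sigma> \<in> set_pmf P"
  have "measure_pmf.prob P {\<tau>. U \<tau> = U \<sigma> \<and> B \<tau> = B \<sigma>} = measure_pmf.prob P {\<tau>. U \<tau> = U \<sigma>}"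
    by (intro measure_pmf_cong_support) (use assms \<sigma> in blast)
  moreover have "measure_pmf.prob P {\<tau>. U \<tau> = U \<sigma>} > 0"
    using \<sigma> by (auto intro: measure_pmf_posI)
  ultimately show "pmf P \<sigma> * log 2 (measure_pmf.prob P {\<tau>. U \<tau> = U \<sigma>}
      / measure_pmf.prob P {\<tau>. U \<tau> = U \<sigma> \<and> B \<tau> = B \<sigma>}) = 0"
    by simp
qed

lemma cond_entropy_le_log_card:
  assumes fin: "finite (set_pmf P)" and "finite A" and range: "B ` set_pmf P \<subseteq> A"
  shows "cond_entropy P B U \<le> log 2 (card A)"
proof -
  let ?S = "set_pmf P"
  define x where "x \<sigma> = measure_pmf.prob P {\<tau>. U \<tau> = U \<sigma>}
    / measure_pmf.prob P {\<tau>. U \<tau> = U \<sigma> \<and> B \<tau> = B \<sigma>}" for \<sigma>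
  have x_pos: "x \<sigma> > 0" if "\<sigma> \<in> ?S" for \<sigma>
    using that by (auto simp: x_def intro!: divide_pos_pos measure_pmf_posI)
  have "(\<Sum>\<sigma>\<in>?S. pmf P \<sigma> * x \<sigma>)
      = (\<Sum>ub\<in>(\<lambda>\<sigma>. (U \<sigma>, B \<sigma>)) ` ?S. \<Sum>\<sigma>\<in>{\<sigma>\<in>?S. (U \<sigma>, B \<sigma>) = ub}. pmf P \<sigma> * x \<sigma>)"
    using fin by (intro sum.group[symmetric]) auto
  also have "\<dots> = (\<Sum>(u, b)\<in>(\<lambda>\<sigma>. (U \<sigma>, B \<sigma>)) ` ?S. measure_pmf.prob P {\<tau>. U \<tau> = u})"
  proof (intro sum.cong refl, clarify)
    fix \<sigma> assume \<sigma>: "\<sigma> \<in> ?S"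
    let ?F = "{\<sigma>'\<in>?S. (U \<sigma>', B \<sigma>') = (U \<sigma>, B \<sigma>)}"
    have "(\<Sum>\<sigma>'\<in>?F. pmf P \<sigma>' * x \<sigma>') = (\<Sum>\<sigma>'\<in>?F. pmf P \<sigma>' * x \<sigma>)"
      by (intro sum.cong) (auto simp: x_def)
    also have "\<dots> = (\<Sum>\<sigma>'\<in>?F. pmf P \<sigma>') * x \<sigma>"
      by (simp add: sum_distrib_right)
    also have "(\<Sum>\<sigma>'\<in>?F. pmf P \<sigma>') = measure_pmf.prob P {\<tau>. U \<tau> = U \<sigma> \<and> B \<tau> = B \<sigma>}"
      using measure_pmf_fibre_eq_sum[OF fin, of "\<lambda>\<tau>. (U \<tau>, B \<tau>)" "(U \<sigma>, B \<sigma>)"] by simp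
    finally show "(\<Sum>\<sigma>'\<in>?F. pmf P \<sigma>' * x \<sigma>') = measure_pmf.prob P {\<tau>. U \<tau> = U \<sigma>}"
      using measure_pmf_posI[OF \<sigma>, of "{\<tau>. U \<tau> = U \<sigma> \<and> B \<tau> = B \<sigma>}"] by (simp add: x_def)
  qed
  also have "\<dots> \<le> (\<Sum>(u, b)\<in>U ` ?S \<times> A. measure_pmf.prob P {\<tau>. U \<tau> = u})"
    using fin \<open>finite A\<close> range by (intro sum_mono2) auto
  also have "\<dots> = real (card A) * (\<Sum>u\<in>U ` ?S. measure_pmf.prob P {\<tau>. U \<tau> = u})"
    by (simp flip: sum.cartesian_product add: sum_distrib_left mult.commute)
  also have "\<dots> = real (card A)"
    using sum_measure_pmf_fibres[OF fin, of U] by simp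
  finally have sum_le: "(\<Sum>\<sigma>\<in>?S. pmf P \<sigma> * x \<sigma>) \<le> real (card A)" .
  have "cond_entropy P B U = (\<Sum>\<sigma>\<in>?S. pmf P \<sigma> * log 2 (x \<sigma>))"
    by (simp add: cond_entropy_def x_def)
  also have "\<dots> \<le> log 2 (\<Sum>\<sigma>\<in>?S. pmf P \<sigma> * x \<sigma>)"
    using fin x_pos by (rule sum_pmf_log_le_log_expectation)
  also have "\<dots> \<le> log 2 (card A)"
    using fin x_pos sum_le set_pmf_not_empty[of P]
    by (intro log_mono sum_pos mult_pos_pos) (auto simp: pmf_positive)
  finally show ?thesis .
qed

lemma cond_KL_div_eq_cond_entropy_diff:
  assumes fin: "finite (set_pmf P)"
    and indep: "\<And>\<sigma>. \<sigma> \<in> set_pmf P \<Longrightarrow> measure_pmf.prob P {\<tau>. U \<tau> = U \<sigma> \<and> X \<tau> = X \<sigma>}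
      = measure_pmf.prob P {\<tau>. U \<tau> = U \<sigma>} * pmf q (X \<sigma>)"
  shows "cond_KL_div P (\<lambda>\<sigma>. (U \<sigma>, B \<sigma>)) X q
    = cond_entropy P B U - cond_entropy P B (\<lambda>\<sigma>. (U \<sigma>, X \<sigma>))"
  unfolding cond_KL_div_eq_sum[OF fin] cond_entropy_def sum_subtractf[symmetric]
proof (intro sum.cong refl)
  fix \<sigma> assume \<sigma>: "\<sigma> \<in> set_pmf P"
  define pU where "pU = measure_pmf.prob P {\<tau>. U \<tau> = U \<sigma>}"
  define pUB where "pUB = measure_pmf.prob P {\<tau>. U \<tau> = U \<sigma> \<and> B \<tau> = B \<sigma>}"
  define pUX where "pUX = measure_pmf.prob P {\<tau>. U \<tau> = U \<sigma> \<and> X \<tau> = X \<sigma>}"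
  define pUBX where "pUBX = measure_pmf.prob P {\<tau>. U \<tau> = U \<sigma> \<and> B \<tau> = B \<sigma> \<and> X \<tau> = X \<sigma>}"
  have "pU > 0" "pUB > 0" "pUX > 0" "pUBX > 0"
    using \<sigma> by (auto simp: pU_def pUB_def pUX_def pUBX_def intro: measure_pmf_posI)
  moreover have "pmf q (X \<sigma>) = pUX / pU"
    using indep[OF \<sigma>] \<open>pU > 0\<close> by (simp add: pU_def pUX_def)
  moreover have "{\<tau>. U \<tau> = U \<sigma> \<and> X \<tau> = X \<sigma> \<and> B \<tau> = B \<sigma>}
      = {\<tau>. U \<tau> = U \<sigma> \<and> B \<tau> = B \<sigma> \<and> X \<tau> = X \<sigma>}"
    by auto
  ultimately show "pmf P \<sigma> * log 2 (measure_pmf.prob P {\<tau>. (U \<tau>, B \<tau>) = (U \<sigma>, B \<sigma>) \<and> X \<tau> = X \<sigma>}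
      / (measure_pmf.prob P {\<tau>. (U \<tau>, B \<tau>) = (U \<sigma>, B \<sigma>)} * pmf q (X \<sigma>)))
    = pmf P \<sigma> * log 2 (measure_pmf.prob P {\<tau>. U \<tau> = U \<sigma>}
        / measure_pmf.prob P {\<tau>. U \<tau> = U \<sigma> \<and> B \<tau> = B \<sigma>})
      - pmf P \<sigma> * log 2 (measure_pmf.prob P {\<tau>. (U \<tau>, X \<tau>) = (U \<sigma>, X \<sigma>)}
        / measure_pmf.prob P {\<tau>. (U \<tau>, X \<tau>) = (U \<sigma>, X \<sigma>) \<and> B \<tau> = B \<sigma>})"
    by (simp add: pU_def [symmetric] pUB_def [symmetric] pUX_def [symmetric] pUBX_def [symmetric]
        conj_assoc log_divide log_mult algebra_simps)
qed

lemma rounds_pmf_Suc_pair: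
  "rounds_pmf p (Suc n) = map_pmf (\<lambda>(xs, x). xs @ [x]) (pair_pmf (rounds_pmf p n) (p n))"
  by (simp add: pair_pmf_def map_bind_pmf map_pmf_def bind_assoc_pmf bind_return_pmf)

lemma set_pmf_rounds_pmfD:
  assumes "\<sigma> \<in> set_pmf (rounds_pmf p n)"
  shows "length \<sigma> = n" and "\<And>i. i < n \<Longrightarrow> \<sigma> ! i \<in> set_pmf (p i)"
proof -
  have "length \<sigma> = n \<and> (\<forall>i<n. \<sigma> ! i \<in> set_pmf (p i))"
    using assms
  proof (induction n arbitrary: \<sigma>)
    case (Suc n)
    then obtain xs x where "\<sigma> = xs @ [x]" "xs \<in> set_pmf (rounds_pmf p n)" "x \<in> set_pmf (p n)"
      by auto
    with Suc.IH[of xs] show ?case by (auto simp: nth_append less_Suc_eq)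
  qed simp
  then show "length \<sigma> = n" and "\<And>i. i < n \<Longrightarrow> \<sigma> ! i \<in> set_pmf (p i)" by auto
qed

lemma finite_set_pmf_rounds_pmf:
  assumes "\<And>i. i < n \<Longrightarrow> finite (set_pmf (p i))"
  shows "finite (set_pmf (rounds_pmf p n))"
proof (rule finite_subset)
  show "set_pmf (rounds_pmf p n) \<subseteq> {xs. set xs \<subseteq> (\<Union>i<n. set_pmf (p i)) \<and> length xs = n}"
  proof
    fix \<sigma> assume "\<sigma> \<in> set_pmf (rounds_pmf p n)"
    note \<sigma> = set_pmf_rounds_pmfD[OF this]
    have "set \<sigma> \<subseteq> (\<Union>i<n. set_pmf (p i))"
      using \<sigma>(2) by (auto simp: in_set_conv_nth \<sigma>(1)) (metis lessThan_iff)
    then show "\<sigma> \<in> {xs. set xs \<subseteq> (\<Union>i<n. set_pmf (p i)) \<and> length xs = n}"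
      using \<sigma>(1) by simp
  qed
  show "finite {xs. set xs \<subseteq> (\<Union>i<n. set_pmf (p i)) \<and> length xs = n}"
    using assms by (intro finite_lists_length_eq) auto
qed

lemma map_pmf_take_rounds_pmf:
  "i \<le> n \<Longrightarrow> map_pmf (take i) (rounds_pmf p n) = rounds_pmf p i"
proof (induction n)
  case (Suc n)
  show ?case
  proof (cases "i = Suc n")
    case True
    have "map_pmf (take i) (rounds_pmf p (Suc n)) = map_pmf id (rounds_pmf p (Suc n))"
      using True by (intro map_pmf_cong) (auto dest: set_pmf_rounds_pmfD)
    then show ?thesis using True by simp
  next
    case False
    then have i: "i \<le> n" using Suc.prems by simp
    have "map_pmf (take i) (rounds_pmf p (Suc n)) =
        bind_pmf (rounds_pmf p n) (\<lambda>xs. map_pmf (\<lambda>x. take i (xs @ [x])) (p n))"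
      by (simp add: map_bind_pmf pmf.map_comp o_def)
    also have "\<dots> = bind_pmf (rounds_pmf p n) (\<lambda>xs. return_pmf (take i xs))"
      using i by (intro bind_pmf_cong) (auto dest: set_pmf_rounds_pmfD simp: map_pmf_const)
    also have "\<dots> = map_pmf (take i) (rounds_pmf p n)"
      by (simp add: map_pmf_def)
    finally show ?thesis using Suc.IH i by simp
  qed
qed simp

lemma pmf_rounds_pmf_snoc:
  "pmf (rounds_pmf p (Suc i)) (xs @ [x]) = pmf (rounds_pmf p i) xs * pmf (p i) x"
proof -
  have "inj (\<lambda>(xs::'a list, x::'a). xs @ [x])" by (auto simp: inj_def)
  then show ?thesis
    unfolding rounds_pmf_Suc_pair using pmf_map_inj'[of "\<lambda>(xs, x). xs @ [x]" _ "(xs, x)"]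
    by (simp add: pmf_pair)
qed

lemma measure_rounds_pmf_take:
  "i \<le> n \<Longrightarrow> measure_pmf.prob (rounds_pmf p n) {\<tau>. take i \<tau> = xs} = pmf (rounds_pmf p i) xs"
  by (simp flip: map_pmf_take_rounds_pmf add: pmf_map vimage_def)

lemma measure_rounds_pmf_take_nth:
  assumes "i < n" and "\<sigma> \<in> set_pmf (rounds_pmf p n)"
  shows "measure_pmf.prob (rounds_pmf p n) {\<tau>. take i \<tau> = take i \<sigma> \<and> \<tau> ! i = \<sigma> ! i}
    = measure_pmf.prob (rounds_pmf p n) {\<tau>. take i \<tau> = take i \<sigma>} * pmf (p i) (\<sigma> ! i)"
proof -
  have take_Suc: "take (Suc i) \<tau> = take i \<tau> @ [\<tau> ! i]" if "\<tau> \<in> set_pmf (rounds_pmf p n)" for \<tau>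
    using set_pmf_rounds_pmfD(1)[OF that] assms(1) by (simp add: take_Suc_conv_app_nth)
  have "measure_pmf.prob (rounds_pmf p n) {\<tau>. take i \<tau> = take i \<sigma> \<and> \<tau> ! i = \<sigma> ! i}
      = measure_pmf.prob (rounds_pmf p n) {\<tau>. take (Suc i) \<tau> = take (Suc i) \<sigma>}"
    using assms(2) by (intro measure_pmf_cong_support) (auto simp: take_Suc)
  also have "\<dots> = pmf (rounds_pmf p i) (take i \<sigma>) * pmf (p i) (\<sigma> ! i)"
    using assms by (simp add: measure_rounds_pmf_take take_Suc pmf_rounds_pmf_snoc del: rounds_pmf.simps)
  finally show ?thesis
    using assms(1) by (simp add: measure_rounds_pmf_take)
qed

lemma sum_cond_KL_div_rounds_pmf_le:
  fixes B :: "'a list \<Rightarrow> 'b"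
  assumes fin: "\<And>i. i < r \<Longrightarrow> finite (set_pmf (p i))" and "finite A"
    and range: "B ` set_pmf (rounds_pmf p r) \<subseteq> A"
  shows "(\<Sum>i<r. cond_KL_div (rounds_pmf p r) (\<lambda>\<sigma>. (take i \<sigma>, B \<sigma>)) (\<lambda>\<sigma>. \<sigma> ! i) (p i))
    \<le> log 2 (card A)"
proof -
  let ?P = "rounds_pmf p r"
  define H where "H i = cond_entropy ?P B (take i)" for i
  have finP: "finite (set_pmf ?P)"
    using fin by (rule finite_set_pmf_rounds_pmf)
  have step: "cond_KL_div ?P (\<lambda>\<sigma>. (take i \<sigma>, B \<sigma>)) (\<lambda>\<sigma>. \<sigma> ! i) (p i) = H i - H (Suc i)"
    if "i < r" for i
  proof -
    have "cond_KL_div ?P (\<lambda>\<sigma>. (take i \<sigma>, B \<sigma>)) (\<lambda>\<sigma>. \<sigma> ! i) (p i)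
        = H i - cond_entropy ?P B (\<lambda>\<sigma>. (take i \<sigma>, \<sigma> ! i))"
      unfolding H_def using finP measure_rounds_pmf_take_nth[OF that]
      by (rule cond_KL_div_eq_cond_entropy_diff)
    also have "cond_entropy ?P B (\<lambda>\<sigma>. (take i \<sigma>, \<sigma> ! i)) = H (Suc i)"
      unfolding H_def using that
      by (intro cond_entropy_cong) (auto dest!: set_pmf_rounds_pmfD(1) simp: take_Suc_conv_app_nth)
    finally show ?thesis .
  qed
  have "(\<Sum>i<r. cond_KL_div ?P (\<lambda>\<sigma>. (take i \<sigma>, B \<sigma>)) (\<lambda>\<sigma>. \<sigma> ! i) (p i))
      = (\<Sum>i<r. H i - H (Suc i))"
    using step by simp
  also have "\<dots> = H 0 - H r"
    by (rule sum_lessThan_telescope')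
  also have "H r = 0"
    unfolding H_def by (intro cond_entropy_eq_0) (auto dest!: set_pmf_rounds_pmfD(1))
  also have "H 0 \<le> log 2 (card A)"
    unfolding H_def using finP \<open>finite A\<close> range by (rule cond_entropy_le_log_card)
  finally show ?thesis by simp
qed

lemma convex_antimono_sum_ge:
  fixes f :: "real \<Rightarrow> real" and K :: "'i \<Rightarrow> real"
  assumes convex: "convex_on {0..} f"
    and decreasing: "\<And>x y. 0 \<le> x \<Longrightarrow> x \<le> y \<Longrightarrow> f y \<le> f x"
    and nonneg: "\<And>i. i \<in> I \<Longrightarrow> 0 \<le> K i" and sum_le: "(\<Sum>i\<in>I. K i) \<le> c"
  shows "real (card I) * f (c / real (card I)) \<le> (\<Sum>i\<in>I. f (K i))"
proof (cases "card I = 0")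
  case True
  then show ?thesis by (auto simp: card_eq_0_iff)
next
  case False
  then have fin: "finite I" "I \<noteq> {}" and n: "real (card I) > 0"
    by (auto simp: card_eq_0_iff)
  have "f (\<Sum>i\<in>I. (1 / real (card I)) *\<^sub>R K i) \<le> (\<Sum>i\<in>I. (1 / real (card I)) * f (K i))"
    using fin nonneg by (intro convex_on_sum[OF _ _ convex]) auto
  then have jensen: "f ((\<Sum>i\<in>I. K i) / real (card I)) \<le> (\<Sum>i\<in>I. f (K i)) / real (card I)"
    by (simp add: sum_divide_distrib[symmetric] sum_distrib_left[symmetric])
  have "f (c / real (card I)) \<le> f ((\<Sum>i\<in>I. K i) / real (card I))"
    using nonneg sum_le n by (intro decreasing divide_nonneg_pos divide_right_mono sum_nonneg) auto
  with jensen have "f (c / real (card I)) \<le> (\<Sum>i\<in>I. f (K i)) / real (card I)"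
    by linarith
  with n show ?thesis by (simp add: field_simps)
qed

theorem theorem7:
  fixes r b :: nat
    and I :: "nat \<Rightarrow> 'a set"
    and p :: "nat \<Rightarrow> 'a pmf"
    and tape :: "'a list \<Rightarrow> nat \<Rightarrow> bool"
    and ALG :: "'a list \<Rightarrow> bool list \<Rightarrow> 'o"
    and cost :: "nat \<Rightarrow> 'o \<Rightarrow> 'a list \<Rightarrow> real"
    and f :: "real \<Rightarrow> real"
  defines "P \<equiv> rounds_pmf p r"
    and "costALG \<equiv> (\<lambda>i \<sigma>. cost i (ALG \<sigma> (advice tape b \<sigma>)) \<sigma>)"
    and "W \<equiv> (\<lambda>i \<sigma>. (take i \<sigma>, advice tape b \<sigma>))"
  assumes I_finite: "\<And>i. i < r \<Longrightarrow> finite (I i)"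
    and p_on_I: "\<And>i. i < r \<Longrightarrow> set_pmf (p i) \<subseteq> I i"
    and cost_nonneg: "\<And>i \<gamma> \<sigma>. i < r \<Longrightarrow> cost i \<gamma> \<sigma> \<ge> 0"
    and f_convex: "convex_on {0..} f"
    and f_decreasing: "\<And>x y. 0 \<le> x \<Longrightarrow> x \<le> y \<Longrightarrow> f y \<le> f x"
    and round_bound:
      "\<And>i w. i < r \<Longrightarrow> w \<in> W i ` set_pmf P \<Longrightarrow>
         measure_pmf.expectation (cond_pmf P {\<sigma>. W i \<sigma> = w}) (costALG i)
           \<ge> f (KL_div (map_pmf (\<lambda>\<sigma>. \<sigma> ! i) (cond_pmf P {\<sigma>. W i \<sigma> = w})) (p i))"
  shows "measure_pmf.expectation P (\<lambda>\<sigma>. \<Sum>i<r. costALG i \<sigma>) \<ge> real r * f (real b / real r)"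
proof -
  define K where "K i = cond_KL_div P (W i) (\<lambda>\<sigma>. \<sigma> ! i) (p i)" for i
  have p_finite: "finite (set_pmf (p i))" if "i < r" for i
    using that I_finite p_on_I by (blast intro: finite_subset)
  then have fin: "finite (set_pmf P)"
    unfolding P_def by (rule finite_set_pmf_rounds_pmf)
  have support: "(\<lambda>\<sigma>. \<sigma> ! i) ` set_pmf P \<subseteq> set_pmf (p i)" if "i < r" for i
    using that unfolding P_def by (auto dest: set_pmf_rounds_pmfD(2))
  have advice_strings: "finite {xs :: bool list. length xs = b}" "card {xs :: bool list. length xs = b} = 2 ^ b"
    using finite_lists_length_eq[of "UNIV :: bool set" b] card_lists_length_eq[of "UNIV :: bool set" b]
    by simp_all
  have "(\<Sum>i<r. K i) \<le> log 2 (card {xs :: bool list. length xs = b})"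
    unfolding K_def W_def P_def using p_finite advice_strings(1)
    by (intro sum_cond_KL_div_rounds_pmf_le) (auto simp: advice_def)
  also have "\<dots> = real b"
    by (simp add: advice_strings(2) log_nat_power)
  finally have "real r * f (real b / real r) \<le> (\<Sum>i<r. f (K i))"
    using convex_antimono_sum_ge[OF f_convex f_decreasing, of "{..<r}" K] fin support
    unfolding K_def by (simp add: cond_KL_div_nonneg)
  also have "\<dots> \<le> (\<Sum>i<r. measure_pmf.expectation P (costALG i))"
  proof (rule sum_mono)
    fix i assume "i \<in> {..<r}"
    then have i: "i < r" by simp
    show "f (K i) \<le> measure_pmf.expectation P (costALG i)"
      unfolding K_def using fin support[OF i] f_convex round_bound[OF i]
      by (rule expectation_ge_cond_KL_div)
  qed
  also have "\<dots> = measure_pmf.expectation P (\<lambda>\<sigma>. \<Sum>i<r. costALG i \<sigma>)"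
    using fin by (intro Bochner_Integration.integral_sum[symmetric] integrable_measure_pmf_finite)
  finally show ?thesis .
qed

end
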